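(* Let $\mathcal{H}$ be a finite $k$-uniform hypergraph such that: (i) $\mathcal{H}$ has a vertex $z$ of degree $2$; (ii) $\delta(\mathcal{H} \setminus \{z\}) \geq 3$ and $d_{\mathcal H}(u) \geq 4$ for every $u \in V(\mathcal{H}) \setminus \{z\}$; (iv) for every two edges $e, e' \in E(\mathcal{H})$, every monomorphism $\phi : V(\mathcal{H} \setminus \{e, e'\}) \to V(\mathcal{H})$ is the identity. Then for every edge $e \in E(\mathcal{H})$, every monomorphism $\phi : V(\mathcal{H} \setminus \{e\}) \to V(\mathcal{H})$ is the identity.
   Context: $d_{\mathcal H}(x)$ is the number of edges containing $x$; $\delta$ is minimum degree. $\mathcal{H}\setminus\{z\}$ for a vertex $z$ is obtained by deleting $z$ and all edges containing it. For a set $S$ of edges, $\mathcal{H}\setminus S$ is the hypergraph with edge set $E(\mathcal H)\setminus S$, and $V(\mathcal{H}\setminus S)$ denotes the union of its edges. A monomorphism $\phi: V(\mathcal{F}')\to V(\mathcal{F})$ (for $\mathcal F'\subseteq \mathcal F$) is an injective map such that $\{\phi(a): a\in x\}$ is an edge of $\mathcal F$ for every edge $x$ of $\mathcal F'$; "identity" means $\phi(a)=a$ for all $a$ in the domain. *)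

theory Defs
  imports Main
begin

definition uniform_hypergraph :: "'a set \<Rightarrow> 'a set set \<Rightarrow> nat \<Rightarrow> bool" where
  "uniform_hypergraph V E k \<longleftrightarrow> finite V \<and> (\<forall>e\<in>E. e \<subseteq> V \<and> card e = k)"

definition hdeg :: "'a set set \<Rightarrow> 'a \<Rightarrow> nat" where
  "hdeg E x = card {e\<in>E. x \<in> e}"

text \<open>Edges of H minus z (delete z and all edges containing it); its vertex set is V - {z}.\<close>
definition del_vertex_edges :: "'a set set \<Rightarrow> 'a \<Rightarrow> 'a set set" where
  "del_vertex_edges E z = {e\<in>E. z \<notin> e}"

definition min_deg_ge :: "'a set \<Rightarrow> 'a set set \<Rightarrow> nat \<Rightarrow> bool" where
  "min_deg_ge V E d \<longleftrightarrow> (\<forall>u\<in>V. hdeg E u \<ge> d)"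

text \<open>Monomorphism from the subhypergraph with edge set F' (vertex set the union of
  its edges) into the hypergraph with edge set F.\<close>
definition monomorphism :: "'a set set \<Rightarrow> 'a set set \<Rightarrow> ('a \<Rightarrow> 'a) \<Rightarrow> bool" where
  "monomorphism F' F \<phi> \<longleftrightarrow> inj_on \<phi> (\<Union>F') \<and> (\<forall>x\<in>F'. \<phi> ` x \<in> F)"

definition is_identity_on :: "'a set \<Rightarrow> ('a \<Rightarrow> 'a) \<Rightarrow> bool" where
  "is_identity_on A \<phi> \<longleftrightarrow> (\<forall>a\<in>A. \<phi> a = a)"

end

theory Submission
  imports Defs
begin

text \<open>A monomorphism of H minus e restricts to one of H minus {e, e'} for every further edge e',
  so by hypothesis it fixes every vertex that still lies in an edge of H minus {e, e'} for some
  e' \<noteq> e.  Every vertex does: a vertex of degree at least 3 has two edges besides e, and the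
  degree-2 vertex z lies in two edges, at most one of which is e, while some edge avoids z because
  a neighbour of z has degree greater than 2.\<close>

lemma monomorphism_subset:
  assumes "monomorphism F' F \<phi>" and "F'' \<subseteq> F'"
  shows "monomorphism F'' F \<phi>"
  using assms unfolding monomorphism_def by (meson Sup_subset_mono inj_on_subset subsetD)

lemma identity_if_covered_after_two_deletions:
  assumes "\<forall>e'\<in>E. e \<noteq> e' \<longrightarrow>
             (\<forall>\<psi>. monomorphism (E - {e, e'}) E \<psi> \<longrightarrow> is_identity_on (\<Union>(E - {e, e'})) \<psi>)"
    and "\<forall>a\<in>\<Union>(E - {e}). \<exists>e'\<in>E. e' \<noteq> e \<and> a \<in> \<Union>(E - {e, e'})"
    and "monomorphism (E - {e}) E \<phi>"
  shows "is_identity_on (\<Union>(E - {e})) \<phi>"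
  unfolding is_identity_on_def
proof
  fix a assume "a \<in> \<Union>(E - {e})"
  with assms(2) have "\<exists>e'\<in>E. e' \<noteq> e \<and> a \<in> \<Union>(E - {e, e'})" by (rule bspec)
  then obtain e' where "e' \<in> E" "e' \<noteq> e" "a \<in> \<Union>(E - {e, e'})" by blast
  have "E - {e, e'} \<subseteq> E - {e}" by blast
  with assms(3) have "monomorphism (E - {e, e'}) E \<phi>" by (rule monomorphism_subset)
  then have "is_identity_on (\<Union>(E - {e, e'})) \<phi>"
    using assms(1) \<open>e' \<in> E\<close> \<open>e' \<noteq> e\<close> by simp
  then show "\<phi> a = a" using \<open>a \<in> \<Union>(E - {e, e'})\<close> unfolding is_identity_on_def by (rule bspec)
qed

lemma hdeg_le_card:
  assumes "finite E"
  shows "hdeg E u \<le> card E"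
  unfolding hdeg_def using assms by (intro card_mono) auto

lemma two_distinct_elements:
  assumes "2 \<le> card A"
  obtains x y where "x \<in> A" "y \<in> A" "x \<noteq> y"
proof -
  from assms obtain x B where "A = insert x B" "x \<notin> B" "1 \<le> card B"
    by (auto simp: card_le_Suc_iff numeral_2_eq_2)
  then obtain y where "y \<in> B" by fastforce
  with \<open>A = insert x B\<close> \<open>x \<notin> B\<close> show ?thesis using that by blast
qed

lemma hdeg_eq_2E:
  assumes "hdeg E a = 2"
  obtains f1 f2 where "f1 \<in> E" "f2 \<in> E" "a \<in> f1" "a \<in> f2" "f1 \<noteq> f2"
proof -
  obtain f1 f2 where "{f\<in>E. a \<in> f} = {f1, f2}" "f1 \<noteq> f2"
    using assms unfolding hdeg_def card_2_iff by blast
  moreover from this(1) have "f1 \<in> E" "f2 \<in> E" "a \<in> f1" "a \<in> f2"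
    by (simp_all add: set_eq_iff) metis+
  ultimately show ?thesis using that by blast
qed

lemma covered_after_two_deletions_if_degree_ge_3:
  assumes "finite E" and "3 \<le> hdeg E a"
  shows "\<exists>e'\<in>E. e' \<noteq> e \<and> a \<in> \<Union>(E - {e, e'})"
proof -
  have "2 \<le> card ({f\<in>E. a \<in> f} - {e})"
    using assms unfolding hdeg_def by (auto simp: card_Diff_singleton_if)
  then obtain f g where "f \<in> E" "g \<in> E" "a \<in> f" "a \<in> g" "f \<noteq> e" "g \<noteq> e" "f \<noteq> g"
    by (rule two_distinct_elements) blast
  then show ?thesis by blast
qed

lemma covered_after_two_deletions_if_degree_2:
  assumes "hdeg E a = 2" and "g \<in> E" and "a \<notin> g"
  shows "\<exists>e'\<in>E. e' \<noteq> e \<and> a \<in> \<Union>(E - {e, e'})"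
proof -
  obtain f1 f2 where "f1 \<in> E" "f2 \<in> E" "a \<in> f1" "a \<in> f2" "f1 \<noteq> f2"
    using assms(1) by (rule hdeg_eq_2E)
  show ?thesis
  proof (cases "a \<in> e")
    case True
    have "g \<noteq> e" using True assms(3) by blast
    obtain f where "f \<in> {f1, f2}" "f \<noteq> e" using \<open>f1 \<noteq> f2\<close> by blast
    then have "a \<in> \<Union>(E - {e, g})"
      using \<open>f1 \<in> E\<close> \<open>f2 \<in> E\<close> \<open>a \<in> f1\<close> \<open>a \<in> f2\<close> assms(3) by blast
    with \<open>g \<noteq> e\<close> assms(2) show ?thesis by blast
  next
    case False
    then have "f1 \<noteq> e" "f2 \<noteq> e" using \<open>a \<in> f1\<close> \<open>a \<in> f2\<close> by auto
    then have "a \<in> \<Union>(E - {e, f1})" using \<open>f1 \<noteq> f2\<close> \<open>f2 \<in> E\<close> \<open>a \<in> f2\<close> by blast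
    with \<open>f1 \<noteq> e\<close> \<open>f1 \<in> E\<close> show ?thesis by blast
  qed
qed

lemma edge_avoiding_degree_2_vertex:
  assumes "finite E" and "hdeg E z = 2" and "\<forall>u\<in>\<Union>E - {z}. 3 \<le> hdeg E u"
  obtains g where "g \<in> E" "z \<notin> g"
proof -
  obtain f1 f2 where "f1 \<in> E" "f2 \<in> E" "z \<in> f1" "z \<in> f2" "f1 \<noteq> f2"
    using assms(2) by (rule hdeg_eq_2E)
  moreover obtain x where "x \<in> f1 \<union> f2" "x \<notin> f1 \<inter> f2" using \<open>f1 \<noteq> f2\<close> by blast
  ultimately obtain u where "u \<in> \<Union>E - {z}" by blast
  with assms(3) have "3 \<le> hdeg E u" by blast
  then have "hdeg E z < card E" using assms(2) hdeg_le_card[OF assms(1), of u] by linarith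
  then have "{f\<in>E. z \<in> f} \<noteq> E" unfolding hdeg_def by (metis less_irrefl)
  then show ?thesis using that by blast
qed

lemma covered_after_two_deletions:
  assumes "finite E" and "hdeg E z = 2" and "\<forall>u\<in>\<Union>E - {z}. 3 \<le> hdeg E u"
    and "a \<in> \<Union>E"
  shows "\<exists>e'\<in>E. e' \<noteq> e \<and> a \<in> \<Union>(E - {e, e'})"
proof (cases "a = z")
  case True
  obtain g where "g \<in> E" "z \<notin> g"
    using assms(1-3) by (rule edge_avoiding_degree_2_vertex)
  with True assms(2) have "hdeg E a = 2" and "g \<in> E" and "a \<notin> g" by simp_all
  then show ?thesis by (rule covered_after_two_deletions_if_degree_2)
next
  case False
  with assms(4) have "a \<in> \<Union>E - {z}" by blast
  with assms(3) have "3 \<le> hdeg E a" by (rule bspec)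
  with assms(1) show ?thesis by (rule covered_after_two_deletions_if_degree_ge_3)
qed

theorem lemma3p2:
  fixes V :: "'a set" and E :: "'a set set" and k :: nat and z :: 'a
  assumes "uniform_hypergraph V E k"
    and "z \<in> V" and "hdeg E z = 2"
    and "min_deg_ge (V - {z}) (del_vertex_edges E z) 3"
    and "\<forall>u\<in>V - {z}. hdeg E u \<ge> 4"
    and "\<forall>e\<in>E. \<forall>e'\<in>E. e \<noteq> e' \<longrightarrow>
           (\<forall>\<phi>. monomorphism (E - {e, e'}) E \<phi> \<longrightarrow> is_identity_on (\<Union>(E - {e, e'})) \<phi>)"
  shows "\<forall>e\<in>E. \<forall>\<phi>. monomorphism (E - {e}) E \<phi> \<longrightarrow> is_identity_on (\<Union>(E - {e})) \<phi>"
proof (intro ballI allI impI)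
  fix e \<phi> assume "e \<in> E" and "monomorphism (E - {e}) E \<phi>"
  have "\<Union>E \<subseteq> V" and "finite V"
    using assms(1) unfolding uniform_hypergraph_def by auto
  then have "E \<subseteq> Pow V" and "finite (Pow V)" by auto
  then have "finite E" by (rule finite_subset)
  have high_degree: "\<forall>u\<in>\<Union>E - {z}. 3 \<le> hdeg E u"
    using assms(5) \<open>\<Union>E \<subseteq> V\<close> by (auto dest!: bspec)
  have "\<forall>a\<in>\<Union>(E - {e}). \<exists>e'\<in>E. e' \<noteq> e \<and> a \<in> \<Union>(E - {e, e'})"
  proof
    fix a assume "a \<in> \<Union>(E - {e})"
    then have "a \<in> \<Union>E" by blast
    with \<open>finite E\<close> assms(3) high_degree show "\<exists>e'\<in>E. e' \<noteq> e \<and> a \<in> \<Union>(E - {e, e'})"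
      by (rule covered_after_two_deletions)
  qed
  with bspec[OF assms(6) \<open>e \<in> E\<close>] show "is_identity_on (\<Union>(E - {e})) \<phi>"
    using \<open>monomorphism (E - {e}) E \<phi>\<close> by (rule identity_if_covered_after_two_deletions)
qed

end
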